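(* Let $G=(N,E)$ be a finite simple undirected graph with at least one edge, and consider the coordination game on $G$ in which every player has strategy set $\{1,2\}$. With the solution set being the set $\mathrm{NE}$ of pure Nash equilibria, $$\mathrm{PoSTA}\ge \frac12-\frac{|N|}{2|E|}\qquad\text{and}\qquad \mathrm{PoA}\ge\frac12,$$ and both bounds are tight (there are graphs for which they hold with equality).
   Context: The coordination game on $G=(N,E)$: players are the nodes, each player $i$ chooses a colour $s_i\in\{1,2\}$, and $u_i(s)=|\{j\in\mathrm{Neighb}(i): s_j=s_i\}|$, where $\mathrm{Neighb}(i)$ is the set of neighbours of $i$. $\mathrm{sw}(s)=\sum_i u_i(s)$. For a solution set $D$: a transition is a profile $t$ such that each $t_i$ equals $d_i$ for some $d\in D$. $\mathrm{BR}_i(s_{-i})$ is the set of best responses of $i$. A stable transition is a transition $s$ such that for every $i$ with $s_i\notin\mathrm{BR}_i(s_{-i})$ there is $j\neq i$ with $s_j\notin\mathrm{BR}_j(s_{-j})$ and some $\hat s_j\in\mathrm{BR}_j(s_{-j})$ with $s_i\in\mathrm{BR}_i(\hat s_j,s_{-\{i,j\}})$; $ST(D)$ is the set of stable transitions. $\mathrm{PoSTA}=\min_{s\in ST(\mathrm{NE})}\mathrm{sw}(s)/\max_{s}\mathrm{sw}(s)$ and $\mathrm{PoA}=\min_{s\in\mathrm{NE}}\mathrm{sw}(s)/\max_s\mathrm{sw}(s)$. *)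

theory Defs
  imports Complex_Main "HOL-Library.FuncSet"
begin

definition simple_graph :: "'a set \<Rightarrow> 'a set set \<Rightarrow> bool" where
  "simple_graph N E \<longleftrightarrow> finite N \<and> (\<forall>e\<in>E. e \<subseteq> N \<and> card e = 2)"

definition Neighb :: "'a set set \<Rightarrow> 'a \<Rightarrow> 'a set" where
  "Neighb E i = {j. {i, j} \<in> E}"

definition profiles :: "'a set \<Rightarrow> ('a \<Rightarrow> nat) set" where
  "profiles N = PiE N (\<lambda>_. {1, 2})"

definition util :: "'a set set \<Rightarrow> ('a \<Rightarrow> nat) \<Rightarrow> 'a \<Rightarrow> nat" where
  "util E s i = card {j \<in> Neighb E i. s j = s i}"

definition sw :: "'a set \<Rightarrow> 'a set set \<Rightarrow> ('a \<Rightarrow> nat) \<Rightarrow> nat" where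
  "sw N E s = (\<Sum>i\<in>N. util E s i)"

text \<open>Best responses of player i to s_{-i} (the component s i is ignored).\<close>
definition BR :: "'a set set \<Rightarrow> 'a \<Rightarrow> ('a \<Rightarrow> nat) \<Rightarrow> nat set" where
  "BR E i s = {c \<in> {1, 2}. \<forall>c' \<in> {1, 2}. util E (s(i := c')) i \<le> util E (s(i := c)) i}"

definition NE :: "'a set \<Rightarrow> 'a set set \<Rightarrow> ('a \<Rightarrow> nat) set" where
  "NE N E = {s \<in> profiles N. \<forall>i\<in>N. s i \<in> BR E i s}"

definition transitions :: "'a set \<Rightarrow> ('a \<Rightarrow> nat) set \<Rightarrow> ('a \<Rightarrow> nat) set" where
  "transitions N D = {t \<in> profiles N. \<forall>i\<in>N. \<exists>d\<in>D. t i = d i}"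

definition ST :: "'a set \<Rightarrow> 'a set set \<Rightarrow> ('a \<Rightarrow> nat) set \<Rightarrow> ('a \<Rightarrow> nat) set" where
  "ST N E D = {s \<in> transitions N D. \<forall>i\<in>N. s i \<notin> BR E i s \<longrightarrow>
      (\<exists>j\<in>N. j \<noteq> i \<and> s j \<notin> BR E j s \<and>
         (\<exists>sh \<in> BR E j s. s i \<in> BR E i (s(j := sh))))}"

definition PoSTA :: "'a set \<Rightarrow> 'a set set \<Rightarrow> real" where
  "PoSTA N E = real (Min (sw N E ` ST N E (NE N E))) / real (Max (sw N E ` profiles N))"

definition PoA :: "'a set \<Rightarrow> 'a set set \<Rightarrow> real" where
  "PoA N E = real (Min (sw N E ` NE N E)) / real (Max (sw N E ` profiles N))"

end

theory Submission
  imports Defs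
begin

text \<open>A player's utilities under her two colours add up to her degree, so a best response
  earns at least half the degree. In a stable transition a player i that is not best responding
  becomes best responding after a single other player j changes colour; such a change moves
  each of i's two utilities by at most one, so i still earns at least half her degree minus one.
  Summing over the players with the handshake lemma gives sw \<ge> |E| on equilibria and
  sw \<ge> |E| - |N| on stable transitions, while a monochromatic profile attains the
  maximum 2|E|. On the 4-cycle both bounds are attained: the alternating colouring is
  a stable transition of welfare 0, and two adjacent blocks of equal colour form an equilibrium
  of welfare 4.\<close>

lemma simple_graph_finite_edges: "simple_graph N E \<Longrightarrow> finite E"
  by (rule finite_subset[of E "Pow N"]) (auto simp: simple_graph_def)

lemma Neighb_subset: "simple_graph N E \<Longrightarrow> Neighb E i \<subseteq> N"
  unfolding simple_graph_def Neighb_def by auto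

lemma finite_Neighb: "simple_graph N E \<Longrightarrow> finite (Neighb E i)"
  using Neighb_subset[of N E i] finite_subset by (auto simp: simple_graph_def)

lemma not_in_Neighb_self: "simple_graph N E \<Longrightarrow> i \<notin> Neighb E i"
  unfolding simple_graph_def Neighb_def by fastforce

lemma card_Neighb_eq_card_incident_edges:
  assumes "simple_graph N E"
  shows "card (Neighb E i) = card {e \<in> E. i \<in> e}"
proof -
  have "bij_betw (\<lambda>j. {i, j}) (Neighb E i) {e \<in> E. i \<in> e}"
  proof (rule bij_betwI')
    show "{i, j} \<in> {e \<in> E. i \<in> e}" if "j \<in> Neighb E i" for j
      using that by (simp add: Neighb_def)
    show "\<exists>j \<in> Neighb E i. e = {i, j}" if e: "e \<in> {e \<in> E. i \<in> e}" for e
    proof -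
      from e assms obtain x y where "e = {x, y}"
        by (auto simp: simple_graph_def card_2_iff)
      with e have "e = {i, if x = i then y else x}"
        by auto
      with e show ?thesis
        by (auto simp: Neighb_def)
    qed
  qed (auto simp: doubleton_eq_iff)
  then show ?thesis
    by (rule bij_betw_same_card)
qed

lemma sum_card_Neighb:
  assumes "simple_graph N E"
  shows "(\<Sum>i\<in>N. card (Neighb E i)) = 2 * card E"
proof -
  have fin: "finite N" "finite E"
    using assms simple_graph_finite_edges by (auto simp: simple_graph_def)
  have "(\<Sum>i\<in>N. card (Neighb E i)) = (\<Sum>i\<in>N. \<Sum>e\<in>E. if i \<in> e then 1 else 0)"
    using fin by (simp add: card_Neighb_eq_card_incident_edges[OF assms] sum.If_cases Int_def)
  also have "\<dots> = (\<Sum>e\<in>E. \<Sum>i\<in>N. if i \<in> e then 1 else 0)"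
    by (rule sum.swap)
  also have "\<dots> = (\<Sum>e\<in>E. card e)"
  proof (rule sum.cong[OF refl])
    fix e assume "e \<in> E"
    with assms have "N \<inter> e = e"
      by (auto simp: simple_graph_def)
    with fin show "(\<Sum>i\<in>N. if i \<in> e then 1 else 0) = card e"
      by (simp add: sum.If_cases)
  qed
  also have "\<dots> = (\<Sum>e\<in>E. 2)"
    using assms by (simp add: simple_graph_def)
  finally show ?thesis
    by simp
qed

lemma profile_in_colours: "s \<in> profiles N \<Longrightarrow> i \<in> N \<Longrightarrow> s i \<in> {1, 2}"
  unfolding profiles_def by (rule PiE_mem)

lemma finite_profiles: "finite N \<Longrightarrow> finite (profiles N)"
  unfolding profiles_def by (simp add: finite_PiE)

lemma finite_sw_image:
  "simple_graph N E \<Longrightarrow> S \<subseteq> profiles N \<Longrightarrow> finite (sw N E ` S)"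
  using finite_profiles[of N] by (auto simp: simple_graph_def intro: finite_subset)

lemma NE_subset_profiles: "NE N E \<subseteq> profiles N"
  unfolding NE_def by auto

lemma ST_subset_profiles: "ST N E D \<subseteq> profiles N"
  unfolding ST_def transitions_def by auto

lemma util_le_card_Neighb: "simple_graph N E \<Longrightarrow> util E s i \<le> card (Neighb E i)"
  unfolding util_def by (rule card_mono[OF finite_Neighb]) auto

lemma util_fun_upd_other_le:
  assumes "finite (Neighb E i)" "j \<noteq> i"
  shows "util E (s(j := c)) i \<le> util E s i + 1"
proof -
  let ?A = "{k \<in> Neighb E i. s k = s i}"
  have "util E (s(j := c)) i \<le> card (insert j ?A)"
    unfolding util_def using assms by (intro card_mono) auto
  also have "\<dots> \<le> card ?A + 1"
    by (simp add: card_insert_if assms(1))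
  finally show ?thesis
    unfolding util_def .
qed

lemma util_add_util_swap_colour:
  assumes "simple_graph N E" "s \<in> profiles N" "i \<in> N"
  shows "util E s i + util E (s(i := 3 - s i)) i = card (Neighb E i)"
proof -
  let ?A = "{j \<in> Neighb E i. s j = s i}" and ?B = "{j \<in> Neighb E i. s j = 3 - s i}"
  have si: "s i \<in> {1, 2}"
    using assms(2,3) by (rule profile_in_colours)
  have "?A \<union> ?B = Neighb E i"
    using si profile_in_colours[OF assms(2)] Neighb_subset[OF assms(1)] by fastforce
  moreover have "?A \<inter> ?B = {}"
    using si by auto
  moreover have "util E (s(i := 3 - s i)) i = card ?B"
    unfolding util_def using not_in_Neighb_self[OF assms(1)]
    by (intro arg_cong[where f = card]) auto
  ultimately show ?thesis
    unfolding util_def using finite_Neighb[OF assms(1)]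
    by (metis (no_types, lifting) card_Un_disjoint finite_Un)
qed

lemma util_le_best_response:
  "c \<in> BR E i s \<Longrightarrow> c' \<in> {1, 2} \<Longrightarrow> util E (s(i := c')) i \<le> util E (s(i := c)) i"
  unfolding BR_def by blast

lemma card_Neighb_le_util_best_response:
  assumes "simple_graph N E" "s \<in> profiles N" "i \<in> N" "s i \<in> BR E i s"
  shows "card (Neighb E i) \<le> 2 * util E s i"
proof -
  have "util E (s(i := 3 - s i)) i \<le> util E s i"
    using util_le_best_response[OF assms(4), of "3 - s i"] profile_in_colours[OF assms(2,3)]
    by auto
  then show ?thesis
    using util_add_util_swap_colour[OF assms(1-3)] by simp
qed

lemma card_Neighb_le_util_stable_transition:
  assumes "simple_graph N E" "s \<in> ST N E D" "i \<in> N"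
  shows "card (Neighb E i) \<le> 2 * util E s i + 2"
proof -
  have s: "s \<in> profiles N"
    using assms(2) by (simp add: ST_def transitions_def)
  show ?thesis
  proof (cases "s i \<in> BR E i s")
    case True
    then show ?thesis
      using card_Neighb_le_util_best_response[OF assms(1) s assms(3)] by simp
  next
    case False
    then obtain j c where j: "j \<noteq> i" "s i \<in> BR E i (s(j := c))"
      using assms(2,3) unfolding ST_def by blast
    let ?t = "s(j := c)" and ?swap = "3 - s i"
    have fin: "finite (Neighb E i)"
      using assms(1) by (rule finite_Neighb)
    have "s(i := ?swap) = (?t(i := ?swap))(j := s j)"
      using j(1) by auto
    then have "util E (s(i := ?swap)) i \<le> util E (?t(i := ?swap)) i + 1"
      using util_fun_upd_other_le[OF fin j(1)] by metis
    also have "util E (?t(i := ?swap)) i \<le> util E (?t(i := s i)) i"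
      using util_le_best_response[OF j(2)] profile_in_colours[OF s assms(3)] by auto
    also have "?t(i := s i) = ?t"
      using j(1) by auto
    also have "util E ?t i \<le> util E s i + 1"
      using util_fun_upd_other_le[OF fin j(1)] .
    finally show ?thesis
      using util_add_util_swap_colour[OF assms(1) s assms(3)] by linarith
  qed
qed

lemma card_edges_le_sw_NE:
  assumes "simple_graph N E" "s \<in> NE N E"
  shows "card E \<le> sw N E s"
proof -
  have "2 * card E = (\<Sum>i\<in>N. card (Neighb E i))"
    using sum_card_Neighb[OF assms(1)] by simp
  also have "\<dots> \<le> (\<Sum>i\<in>N. 2 * util E s i)"
    using assms by (intro sum_mono) (auto intro: card_Neighb_le_util_best_response simp: NE_def)
  also have "\<dots> = 2 * sw N E s"
    by (simp add: sw_def sum_distrib_left)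
  finally show ?thesis
    by simp
qed

lemma card_edges_le_sw_ST:
  assumes "simple_graph N E" "s \<in> ST N E D"
  shows "card E \<le> sw N E s + card N"
proof -
  have "2 * card E = (\<Sum>i\<in>N. card (Neighb E i))"
    using sum_card_Neighb[OF assms(1)] by simp
  also have "\<dots> \<le> (\<Sum>i\<in>N. 2 * util E s i + 2)"
    by (intro sum_mono card_Neighb_le_util_stable_transition[OF assms])
  also have "\<dots> = 2 * sw N E s + 2 * card N"
    unfolding sum.distrib by (simp add: sw_def sum_distrib_left)
  finally show ?thesis
    by simp
qed

lemma constant_profile_in_profiles: "c \<in> {1, 2} \<Longrightarrow> restrict (\<lambda>_. c) N \<in> profiles N"
  unfolding profiles_def by auto

lemma util_constant_profile:
  "simple_graph N E \<Longrightarrow> i \<in> N \<Longrightarrow> util E (restrict (\<lambda>_. c) N) i = card (Neighb E i)"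
  unfolding util_def using Neighb_subset[of N E i]
  by (intro arg_cong[where f = card]) auto

lemma constant_profile_NE:
  assumes "simple_graph N E" "c \<in> {1, 2}"
  shows "restrict (\<lambda>_. c) N \<in> NE N E"
  unfolding NE_def
proof (intro CollectI conjI ballI)
  fix i assume i: "i \<in> N"
  then have "(restrict (\<lambda>_. c) N)(i := c) = restrict (\<lambda>_. c) N"
    by auto
  with i show "restrict (\<lambda>_. c) N i \<in> BR E i (restrict (\<lambda>_. c) N)"
    unfolding BR_def
    using assms util_le_card_Neighb[OF assms(1)] util_constant_profile[OF assms(1) i] by auto
qed (rule constant_profile_in_profiles[OF assms(2)])

lemma NE_subset_ST: "NE N E \<subseteq> ST N E (NE N E)"
  unfolding ST_def transitions_def NE_def by auto

lemma transitions_NE_eq_profiles: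
  assumes "simple_graph N E"
  shows "transitions N (NE N E) = profiles N"
proof -
  have "\<exists>d \<in> NE N E. s i = d i" if "s \<in> profiles N" "i \<in> N" for s i
    using that constant_profile_NE[OF assms profile_in_colours[OF that]]
    by (intro bexI[of _ "restrict (\<lambda>_. s i) N"]) auto
  then show ?thesis
    unfolding transitions_def by auto
qed

lemma Max_sw_eq:
  assumes "simple_graph N E"
  shows "Max (sw N E ` profiles N) = 2 * card E"
proof (rule Max_eqI)
  show "finite (sw N E ` profiles N)"
    using finite_sw_image[OF assms] by simp
  show "y \<le> 2 * card E" if y: "y \<in> sw N E ` profiles N" for y
  proof -
    obtain s where "y = sw N E s"
      using y by blast
    also have "\<dots> \<le> (\<Sum>i\<in>N. card (Neighb E i))"
      unfolding sw_def by (intro sum_mono util_le_card_Neighb[OF assms])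
    also have "\<dots> = 2 * card E"
      by (rule sum_card_Neighb[OF assms])
    finally show ?thesis .
  qed
  have "sw N E (restrict (\<lambda>_. 1) N) = 2 * card E"
    unfolding sw_def using util_constant_profile[OF assms] sum_card_Neighb[OF assms] by simp
  then show "2 * card E \<in> sw N E ` profiles N"
    using constant_profile_in_profiles[of 1 N] by force
qed

lemma card_edges_le_Min_sw_NE:
  assumes "simple_graph N E"
  shows "card E \<le> Min (sw N E ` NE N E)"
proof -
  have "finite (sw N E ` NE N E)"
    using finite_sw_image[OF assms NE_subset_profiles] .
  moreover have "NE N E \<noteq> {}"
    using constant_profile_NE[OF assms, of 1] by blast
  ultimately show ?thesis
    using card_edges_le_sw_NE[OF assms] by simp
qed

lemma card_edges_le_Min_sw_ST:
  assumes "simple_graph N E"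
  shows "card E \<le> Min (sw N E ` ST N E (NE N E)) + card N"
proof -
  have "finite (sw N E ` ST N E (NE N E))"
    using finite_sw_image[OF assms ST_subset_profiles] .
  moreover have "sw N E ` ST N E (NE N E) \<noteq> {}"
    using constant_profile_NE[OF assms, of 1] NE_subset_ST[of N E] by auto
  ultimately have "Min (sw N E ` ST N E (NE N E)) \<in> sw N E ` ST N E (NE N E)"
    by (rule Min_in)
  then obtain s where "s \<in> ST N E (NE N E)" "Min (sw N E ` ST N E (NE N E)) = sw N E s"
    by auto
  then show ?thesis
    using card_edges_le_sw_ST[OF assms] by simp
qed

lemma PoA_ge_half:
  assumes "simple_graph N E" "E \<noteq> {}"
  shows "PoA N E \<ge> 1/2"
proof -
  have "card E > 0"
    using assms(2) simple_graph_finite_edges[OF assms(1)] by (simp add: card_gt_0_iff)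
  then show ?thesis
    using card_edges_le_Min_sw_NE[OF assms(1)]
    by (simp add: PoA_def Max_sw_eq[OF assms(1)] field_simps)
qed

lemma PoSTA_ge:
  assumes "simple_graph N E" "E \<noteq> {}"
  shows "PoSTA N E \<ge> 1/2 - real (card N) / (2 * real (card E))"
proof -
  have E: "real (card E) > 0"
    using assms(2) simple_graph_finite_edges[OF assms(1)] by (simp add: card_gt_0_iff)
  have "real (card E) - real (card N) \<le> real (Min (sw N E ` ST N E (NE N E)))"
    using card_edges_le_Min_sw_ST[OF assms(1)] by linarith
  then have "(real (card E) - real (card N)) / (2 * real (card E)) \<le> PoSTA N E"
    unfolding PoSTA_def Max_sw_eq[OF assms(1)] using E by (simp add: divide_right_mono)
  also have "(real (card E) - real (card N)) / (2 * real (card E)) =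
      1/2 - real (card N) / (2 * real (card E))"
    using E by (simp add: field_simps)
  finally show ?thesis .
qed

definition cycle4_vertices :: "nat set" where
  "cycle4_vertices = {0, 1, 2, 3}"

definition cycle4_edges :: "nat set set" where
  "cycle4_edges = {{0, 1}, {1, 2}, {2, 3}, {3, 0}}"

definition cycle4_alternating :: "nat \<Rightarrow> nat" where
  "cycle4_alternating = restrict (\<lambda>i. if even i then 1 else 2) cycle4_vertices"

definition cycle4_blocks :: "nat \<Rightarrow> nat" where
  "cycle4_blocks = restrict (\<lambda>i. if i \<le> 1 then 1 else 2) cycle4_vertices"

lemma simple_graph_cycle4: "simple_graph cycle4_vertices cycle4_edges"
  unfolding simple_graph_def cycle4_vertices_def cycle4_edges_def by auto

lemma cycle4_edges_nonempty: "cycle4_edges \<noteq> {}"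
  by (simp add: cycle4_edges_def)

lemma card_cycle4_edges: "card cycle4_edges = 4"
  unfolding cycle4_edges_def by (simp add: doubleton_eq_iff)

lemma card_cycle4_vertices: "card cycle4_vertices = 4"
  unfolding cycle4_vertices_def by simp

lemma Neighb_cycle4:
  "Neighb cycle4_edges i =
    (if i = 0 \<or> i = 2 then {1, 3} else if i = 1 \<or> i = 3 then {0, 2} else {})"
  unfolding Neighb_def cycle4_edges_def by (auto simp: doubleton_eq_iff)

lemma util_cycle4: "util cycle4_edges s i = (\<Sum>j\<in>Neighb cycle4_edges i. if s j = s i then 1 else 0)"
  unfolding util_def using finite_Neighb[OF simple_graph_cycle4]
  by (simp add: sum.If_cases Int_def)

lemmas cycle4_simps = util_cycle4 Neighb_cycle4 cycle4_vertices_def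
  cycle4_alternating_def cycle4_blocks_def

lemma sw_cycle4_alternating: "sw cycle4_vertices cycle4_edges cycle4_alternating = 0"
  by (simp add: sw_def cycle4_simps)

lemma sw_cycle4_blocks: "sw cycle4_vertices cycle4_edges cycle4_blocks = 4"
  by (simp add: sw_def cycle4_simps)

lemma cycle4_blocks_NE: "cycle4_blocks \<in> NE cycle4_vertices cycle4_edges"
proof -
  have "cycle4_blocks \<in> profiles cycle4_vertices"
    by (auto simp: profiles_def cycle4_blocks_def)
  then show ?thesis
    by (simp add: NE_def BR_def cycle4_simps)
qed

text \<open>Every player of the alternating colouring has both neighbours of the other colour; when one
  of them switches (itself a best response), the player is indifferent and hence best responding.\<close>

lemma cycle4_alternating_ST:
  "cycle4_alternating \<in> ST cycle4_vertices cycle4_edges (NE cycle4_vertices cycle4_edges)"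
proof -
  have "cycle4_alternating \<in> profiles cycle4_vertices"
    by (auto simp: profiles_def cycle4_alternating_def)
  then show ?thesis
    unfolding ST_def transitions_NE_eq_profiles[OF simple_graph_cycle4]
    by (simp add: BR_def cycle4_simps)
qed

lemma PoSTA_cycle4: "PoSTA cycle4_vertices cycle4_edges = 0"
proof -
  have "Min (sw cycle4_vertices cycle4_edges `
      ST cycle4_vertices cycle4_edges (NE cycle4_vertices cycle4_edges))
    \<le> sw cycle4_vertices cycle4_edges cycle4_alternating"
    by (intro Min_le finite_sw_image[OF simple_graph_cycle4 ST_subset_profiles]
        imageI cycle4_alternating_ST)
  then show ?thesis
    by (simp add: PoSTA_def sw_cycle4_alternating)
qed

lemma PoA_cycle4: "PoA cycle4_vertices cycle4_edges = 1/2"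
proof -
  have "Min (sw cycle4_vertices cycle4_edges ` NE cycle4_vertices cycle4_edges)
    \<le> sw cycle4_vertices cycle4_edges cycle4_blocks"
    by (intro Min_le finite_sw_image[OF simple_graph_cycle4 NE_subset_profiles]
        imageI cycle4_blocks_NE)
  then have "PoA cycle4_vertices cycle4_edges \<le> 1/2"
    by (simp add: PoA_def Max_sw_eq[OF simple_graph_cycle4] card_cycle4_edges sw_cycle4_blocks)
  then show ?thesis
    using PoA_ge_half[OF simple_graph_cycle4 cycle4_edges_nonempty] by simp
qed

theorem theorem4:
  fixes N :: "'a set" and E :: "'a set set"
  assumes "simple_graph N E" and "E \<noteq> {}"
  shows "PoSTA N E \<ge> 1/2 - real (card N) / (2 * real (card E))
       \<and> PoA N E \<ge> 1/2
       \<and> (\<exists>(N' :: nat set) E'. simple_graph N' E' \<and> E' \<noteq> {} \<and>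
             PoSTA N' E' = 1/2 - real (card N') / (2 * real (card E')))
       \<and> (\<exists>(N' :: nat set) E'. simple_graph N' E' \<and> E' \<noteq> {} \<and> PoA N' E' = 1/2)"
proof -
  have "PoSTA cycle4_vertices cycle4_edges =
      1/2 - real (card cycle4_vertices) / (2 * real (card cycle4_edges))"
    by (simp add: PoSTA_cycle4 card_cycle4_vertices card_cycle4_edges)
  then show ?thesis
    using PoSTA_ge[OF assms] PoA_ge_half[OF assms] PoA_cycle4
      simple_graph_cycle4 cycle4_edges_nonempty by blast
qed

end
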